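(* Let $P=\{p_1,\dots,p_n\}$ be weighted points in $\mathbb{R}^2$ with total weight $1$, let $S=\{s_1,\dots,s_m\}$ be triangles in $\mathbb{R}^2$ of total area $1$ with longest edge length $\Delta$, and let $0<\delta\le\frac{1}{2\pi}$. Let $\tau$ be the transport plan produced by the construction described in the context and $\tau^*$ an optimal transport plan between $P$ and $S$. Then $\|\tau\|\le(1+9\delta)\|\tau^*\|$.
   Context: Each triangle's mass equals its area and is spread uniformly over it (all triangles have density one; overlapping triangles add densities). A transport plan from $P$ to $S$ moves from each $p$ its weight $\|p\|$ and delivers to the triangles exactly their mass distribution; its cost $\|\tau\|$ is the integral of (mass moved) times Euclidean distance; $\|\tau^*\|$ is the minimum cost (earth mover's distance). Construction: (1) Overlay a uniform grid of $\Delta\times\Delta$ square cells and keep the cells intersecting some triangle. (2) Recursively process each cell: if there is a point of $P$ such that the whole cell lies within Euclidean distance $\delta/\sqrt{nm}$ of it, stop; otherwise, if for some point of $P$ the ratio of the distances to the furthest and the closest point of the cell exceeds $1+\delta$, split the cell into four equal squares and recurse; otherwise stop. Let $Q$ be the resulting cells, each recording the total area of triangles within it. (3) In each cell $q\in Q$ pick an arbitrary point with weight equal to the total area of triangles contained in $q$; call this weighted set $T$. (4) Compute an optimal transport plan $\nu$ between $P$ and $T$. (5) Obtain $\tau$ by spreading the mass sent by $\nu$ to each $t\in T$ uniformly over the parts of the triangles lying in the cell from which $t$ was chosen. *)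

theory Defs
  imports "HOL-Analysis.Analysis"
begin

type_synonym pt = "real \<times> real"

text \<open>A cell is encoded by its lower-left corner and its side length.
  The cell itself is the half-open square (cells of one level partition the plane);
  its closure is the closed square.\<close>

definition sq :: "pt \<Rightarrow> real \<Rightarrow> pt set" where
  "sq a l = {fst a ..< fst a + l} \<times> {snd a ..< snd a + l}"

definition csq :: "pt \<Rightarrow> real \<Rightarrow> pt set" where
  "csq a l = {fst a .. fst a + l} \<times> {snd a .. snd a + l}"

definition tri :: "pt \<Rightarrow> pt \<Rightarrow> pt \<Rightarrow> pt set" where
  "tri u v w = convex hull {u, v, w}"

definition tri_dens :: "nat \<Rightarrow> (nat \<Rightarrow> pt) \<Rightarrow> (nat \<Rightarrow> pt) \<Rightarrow> (nat \<Rightarrow> pt) \<Rightarrow> pt \<Rightarrow> real" where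
  "tri_dens m a b c x = (\<Sum>j<m. indicator (tri (a j) (b j) (c j)) x)"

definition tri_union :: "nat \<Rightarrow> (nat \<Rightarrow> pt) \<Rightarrow> (nat \<Rightarrow> pt) \<Rightarrow> (nat \<Rightarrow> pt) \<Rightarrow> pt set" where
  "tri_union m a b c = (\<Union>j<m. tri (a j) (b j) (c j))"

definition cell_mass :: "nat \<Rightarrow> (nat \<Rightarrow> pt) \<Rightarrow> (nat \<Rightarrow> pt) \<Rightarrow> (nat \<Rightarrow> pt) \<Rightarrow> pt \<times> real \<Rightarrow> real" where
  "cell_mass m a b c q = (\<Sum>j<m. measure lborel (tri (a j) (b j) (c j) \<inter> sq (fst q) (snd q)))"

definition longest_edge :: "nat \<Rightarrow> (nat \<Rightarrow> pt) \<Rightarrow> (nat \<Rightarrow> pt) \<Rightarrow> (nat \<Rightarrow> pt) \<Rightarrow> real" where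
  "longest_edge m a b c =
     Max (\<Union>j<m. {dist (a j) (b j), dist (b j) (c j), dist (c j) (a j)})"

text \<open>Stopping / splitting rule of the recursion.
  The ratio furthest/closest exceeds 1+delta is written multiplicatively
  (closest distance 0 means infinite ratio).\<close>
definition near_cell :: "pt \<Rightarrow> real \<Rightarrow> pt set \<Rightarrow> bool" where
  "near_cell p r C \<longleftrightarrow> (\<forall>x\<in>C. dist p x \<le> r)"

definition ratio_exceeds :: "pt \<Rightarrow> real \<Rightarrow> pt set \<Rightarrow> bool" where
  "ratio_exceeds p \<delta> C \<longleftrightarrow> (SUP x\<in>C. dist p x) > (1 + \<delta>) * (INF x\<in>C. dist p x)"

definition splits :: "nat \<Rightarrow> nat \<Rightarrow> (nat \<Rightarrow> pt) \<Rightarrow> real \<Rightarrow> pt set \<Rightarrow> bool" where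
  "splits n m p \<delta> C \<longleftrightarrow>
     \<not> (\<exists>i<n. near_cell (p i) (\<delta> / sqrt (real n * real m)) C)
     \<and> (\<exists>i<n. ratio_exceeds (p i) \<delta> C)"

text \<open>All cells produced by the recursive subdivision (internal nodes and leaves).
  The grid has side Delta and is anchored at the point org.\<close>
inductive_set qtree :: "nat \<Rightarrow> nat \<Rightarrow> (nat \<Rightarrow> pt) \<Rightarrow> real \<Rightarrow> pt set \<Rightarrow> real \<Rightarrow> pt
                        \<Rightarrow> (pt \<times> real) set"
  for n m p \<delta> U \<Delta> org where
  grid: "sq (fst org + real_of_int i * \<Delta>, snd org + real_of_int j * \<Delta>) \<Delta> \<inter> U \<noteq> {}
         \<Longrightarrow> ((fst org + real_of_int i * \<Delta>, snd org + real_of_int j * \<Delta>), \<Delta>)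
               \<in> qtree n m p \<delta> U \<Delta> org"
| child: "(a, l) \<in> qtree n m p \<delta> U \<Delta> org \<Longrightarrow> splits n m p \<delta> (sq a l)
         \<Longrightarrow> k \<in> {0, 1} \<Longrightarrow> k' \<in> {0, 1}
         \<Longrightarrow> ((fst a + k * (l / 2), snd a + k' * (l / 2)), l / 2) \<in> qtree n m p \<delta> U \<Delta> org"

definition leaf_cells where
  "leaf_cells n m p \<delta> U \<Delta> org =
     {q \<in> qtree n m p \<delta> U \<Delta> org. \<not> splits n m p \<delta> (sq (fst q) (snd q))}"

text \<open>Transport plans from the weighted points p_i (weights w_i) to the mass
  distribution with density dens, given by densities f_i of the mass sent from p_i.\<close>
definition is_plan :: "nat \<Rightarrow> (nat \<Rightarrow> real) \<Rightarrow> (pt \<Rightarrow> real) \<Rightarrow> (nat \<Rightarrow> pt \<Rightarrow> real) \<Rightarrow> bool" where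
  "is_plan n w dens f \<longleftrightarrow>
     (\<forall>i<n. (\<forall>x. 0 \<le> f i x) \<and> integrable lborel (f i) \<and> integral\<^sup>L lborel (f i) = w i)
     \<and> (AE x in lborel. (\<Sum>i<n. f i x) = dens x)"

definition plan_cost :: "nat \<Rightarrow> (nat \<Rightarrow> pt) \<Rightarrow> (nat \<Rightarrow> pt \<Rightarrow> real) \<Rightarrow> real" where
  "plan_cost n p f = (\<Sum>i<n. integral\<^sup>L lborel (\<lambda>x. f i x * dist x (p i)))"

definition is_disc_plan :: "nat \<Rightarrow> (nat \<Rightarrow> real) \<Rightarrow> 'q set \<Rightarrow> ('q \<Rightarrow> real) \<Rightarrow> (nat \<Rightarrow> 'q \<Rightarrow> real) \<Rightarrow> bool" where
  "is_disc_plan n w Q wt \<nu> \<longleftrightarrow>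
     (\<forall>i<n. \<forall>q\<in>Q. 0 \<le> \<nu> i q) \<and> (\<forall>i<n. (\<Sum>q\<in>Q. \<nu> i q) = w i) \<and> (\<forall>q\<in>Q. (\<Sum>i<n. \<nu> i q) = wt q)"

definition disc_cost :: "nat \<Rightarrow> (nat \<Rightarrow> pt) \<Rightarrow> 'q set \<Rightarrow> ('q \<Rightarrow> pt) \<Rightarrow> (nat \<Rightarrow> 'q \<Rightarrow> real) \<Rightarrow> real" where
  "disc_cost n p Q t \<nu> = (\<Sum>i<n. \<Sum>q\<in>Q. \<nu> i q * dist (p i) (t q))"

definition spread_plan :: "nat \<Rightarrow> (nat \<Rightarrow> pt) \<Rightarrow> (nat \<Rightarrow> pt) \<Rightarrow> (nat \<Rightarrow> pt) \<Rightarrow> (pt \<times> real) set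
                           \<Rightarrow> (nat \<Rightarrow> pt \<times> real \<Rightarrow> real) \<Rightarrow> nat \<Rightarrow> pt \<Rightarrow> real" where
  "spread_plan m a b c Q \<nu> i x =
     (\<Sum>q\<in>Q. \<nu> i q / cell_mass m a b c q * indicator (sq (fst q) (snd q)) x) * tri_dens m a b c x"

end

theory Submission
  imports Defs
begin

text \<open>Every leaf cell is either near some point of P, in which case all points of P see the
  cell with distances varying by at most 2r (r = \<delta>/sqrt(nm)), or it is not split because all
  furthest/closest distance ratios are at most 1 + \<delta>. So sending mass to the representative
  t q, or spreading it over the cell, changes every distance by a factor 1 + \<delta> plus 2r on near
  cells. Restricting an optimal plan to the cells gives a competitor for the discrete problem,
  whence the cost of the spread plan is at most (1 + \<delta>)^2 times the optimum plus (2 + \<delta>) E,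
  with E = 2r times the mass of the near cells. Near cells lie in boxes of half side
  s = 1/(4 sqrt(nm)) around the points, which carry mass at most 1/4 because the density is at
  most m; hence E \<le> 2 \<delta> s, while the remaining mass 3/4 travels at least s, so the optimum is
  at least 3s/4. For \<delta> \<le> 1/4 these combine to the factor 1 + 9 \<delta>.\<close>

section \<open>Dyadic cells and the subdivision tree\<close>

abbreviation cell_sq :: "pt \<times> real \<Rightarrow> pt set" where
  "cell_sq q \<equiv> sq (fst q) (snd q)"

definition dyadic_index :: "real \<Rightarrow> nat \<Rightarrow> real \<Rightarrow> real \<Rightarrow> int" where
  "dyadic_index \<Delta> k x0 y = \<lfloor>(y - x0) * 2 ^ k / \<Delta>\<rfloor>"

definition dyadic_cell :: "pt \<Rightarrow> real \<Rightarrow> nat \<Rightarrow> int \<Rightarrow> int \<Rightarrow> pt \<times> real" where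
  "dyadic_cell org \<Delta> k i j =
     ((fst org + of_int i * (\<Delta> / 2 ^ k), snd org + of_int j * (\<Delta> / 2 ^ k)), \<Delta> / 2 ^ k)"

lemma dyadic_index_eq_iff:
  assumes "\<Delta> > 0"
  shows "dyadic_index \<Delta> k x0 y = i \<longleftrightarrow>
           x0 + of_int i * (\<Delta> / 2 ^ k) \<le> y \<and> y < x0 + of_int i * (\<Delta> / 2 ^ k) + \<Delta> / 2 ^ k"
  using assms by (simp add: dyadic_index_def floor_eq_iff field_simps)

lemma mem_dyadic_cell:
  assumes "\<Delta> > 0"
  shows "x \<in> cell_sq (dyadic_cell org \<Delta> k i j) \<longleftrightarrow>
           dyadic_index \<Delta> k (fst org) (fst x) = i \<and> dyadic_index \<Delta> k (snd org) (snd x) = j"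
  using assms by (cases x) (simp add: dyadic_cell_def sq_def dyadic_index_eq_iff)

lemma dyadic_index_coarsen:
  assumes "k' \<le> k"
  shows "dyadic_index \<Delta> k' x0 y = dyadic_index \<Delta> k x0 y div 2 ^ (k - k')"
proof -
  have "(2::real) ^ k = 2 ^ k' * 2 ^ (k - k')"
    using assms by (simp flip: power_add)
  then have "(y - x0) * 2 ^ k' / \<Delta> = (y - x0) * 2 ^ k / \<Delta> / of_int (2 ^ (k - k'))"
    by simp
  then show ?thesis
    unfolding dyadic_index_def
    using floor_divide_real_eq_div[of "2 ^ (k - k')" "(y - x0) * 2 ^ k / \<Delta>"] by simp
qed

lemma dyadic_cell_overlap:
  assumes "\<Delta> > 0" and "k' \<le> k"
    and "x \<in> cell_sq (dyadic_cell org \<Delta> k i j)" and "x \<in> cell_sq (dyadic_cell org \<Delta> k' i' j')"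
  shows "i' = i div 2 ^ (k - k') \<and> j' = j div 2 ^ (k - k')"
  using assms by (simp add: mem_dyadic_cell dyadic_index_coarsen)

lemma dyadic_cell_child:
  assumes "(a, l) = dyadic_cell org \<Delta> k i j"
  shows "((fst a + of_int e * (l / 2), snd a + of_int e' * (l / 2)), l / 2)
           = dyadic_cell org \<Delta> (Suc k) (2 * i + e) (2 * j + e')"
  using assms by (simp add: dyadic_cell_def field_simps)

lemma qtree_dyadic_ancestors:
  assumes "(a, l) \<in> qtree n m p \<delta> U \<Delta> org"
  shows "\<exists>k i j. (a, l) = dyadic_cell org \<Delta> k i j \<and>
           (\<forall>k'\<le>k. let q' = dyadic_cell org \<Delta> k' (i div 2 ^ (k - k')) (j div 2 ^ (k - k'))
                    in q' \<in> qtree n m p \<delta> U \<Delta> org \<and> (k' < k \<longrightarrow> splits n m p \<delta> (cell_sq q')))"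
  using assms
proof (induction rule: qtree.induct)
  case (grid i j)
  then show ?case
    by (intro exI[of _ 0] exI[of _ i] exI[of _ j]) (simp add: dyadic_cell_def qtree.grid)
next
  case (child a l e e')
  from child.IH obtain k i j where parent: "(a, l) = dyadic_cell org \<Delta> k i j"
    and anc: "\<forall>k'\<le>k. let q' = dyadic_cell org \<Delta> k' (i div 2 ^ (k - k')) (j div 2 ^ (k - k'))
                    in q' \<in> qtree n m p \<delta> U \<Delta> org \<and> (k' < k \<longrightarrow> splits n m p \<delta> (cell_sq q'))"
    by blast
  obtain d d' :: int where d: "e = of_int d" "e' = of_int d'" "d \<in> {0, 1}" "d' \<in> {0, 1}"
    using child.hyps(3,4) by (metis insertE of_int_0 of_int_1 insertI1 insertI2 singletonD)
  have halve: "(2 * i + d) div 2 ^ (Suc k - k') = i div 2 ^ (k - k')"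
              "(2 * j + d') div 2 ^ (Suc k - k') = j div 2 ^ (k - k')" if "k' \<le> k" for k'
    using that d(3,4) by (auto simp: Suc_diff_le zdiv_zmult2_eq)
  show ?case
  proof (intro exI conjI allI impI)
    show "((fst a + e * (l / 2), snd a + e' * (l / 2)), l / 2)
            = dyadic_cell org \<Delta> (Suc k) (2 * i + d) (2 * j + d')"
      using dyadic_cell_child[OF parent] d by simp
    fix k' assume "k' \<le> Suc k"
    then consider "k' = Suc k" | "k' = k" | "k' < k" by linarith
    then show "let q' = dyadic_cell org \<Delta> k' ((2 * i + d) div 2 ^ (Suc k - k')) ((2 * j + d') div 2 ^ (Suc k - k'))
               in q' \<in> qtree n m p \<delta> U \<Delta> org \<and> (k' < Suc k \<longrightarrow> splits n m p \<delta> (cell_sq q'))"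
    proof cases
      case 1
      then show ?thesis
        using dyadic_cell_child[OF parent] d qtree.child[OF child.hyps] by (simp add: Let_def)
    next
      case 2
      then show ?thesis
        using halve[of k] child.hyps(1,2) by (simp add: Let_def flip: parent)
    next
      case 3
      then show ?thesis
        using halve[of k'] anc by (simp add: Let_def)
    qed
  qed
qed

lemma dyadic_cell_inj:
  assumes "\<Delta> > 0" and "dyadic_cell org \<Delta> k i j = dyadic_cell org \<Delta> k' i' j'"
  shows "k = k' \<and> i = i' \<and> j = j'"
proof -
  have "(2::real) ^ k = 2 ^ k'"
    using assms by (simp add: dyadic_cell_def field_simps)
  then have "k = k'"
    by simp
  with assms show ?thesis
    by (simp add: dyadic_cell_def)
qed

lemma qtree_dyadic:
  assumes "q \<in> qtree n m p \<delta> U \<Delta> org"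
  shows "\<exists>k i j. q = dyadic_cell org \<Delta> k i j"
proof -
  obtain a l where "q = (a, l)"
    by fastforce
  with assms qtree_dyadic_ancestors show ?thesis
    by blast
qed

lemma qtree_ancestor:
  assumes "\<Delta> > 0" and "dyadic_cell org \<Delta> k i j \<in> qtree n m p \<delta> U \<Delta> org" and "k' \<le> k"
  shows "dyadic_cell org \<Delta> k' (i div 2 ^ (k - k')) (j div 2 ^ (k - k')) \<in> qtree n m p \<delta> U \<Delta> org
         \<and> (k' < k \<longrightarrow> splits n m p \<delta> (cell_sq (dyadic_cell org \<Delta> k' (i div 2 ^ (k - k')) (j div 2 ^ (k - k')))))"
proof -
  have "(fst (dyadic_cell org \<Delta> k i j), snd (dyadic_cell org \<Delta> k i j)) \<in> qtree n m p \<delta> U \<Delta> org"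
    using assms(2) by simp
  from qtree_dyadic_ancestors[OF this, unfolded prod.collapse] obtain k0 i0 j0
    where rep: "dyadic_cell org \<Delta> k i j = dyadic_cell org \<Delta> k0 i0 j0"
      and anc: "\<forall>k'\<le>k0. let q' = dyadic_cell org \<Delta> k' (i0 div 2 ^ (k0 - k')) (j0 div 2 ^ (k0 - k'))
                  in q' \<in> qtree n m p \<delta> U \<Delta> org \<and> (k' < k0 \<longrightarrow> splits n m p \<delta> (cell_sq q'))"
    by blast
  with dyadic_cell_inj[OF assms(1) rep] assms(3) show ?thesis
    by (simp add: Let_def)
qed

lemma leaf_cells_nested_eq:
  assumes "\<Delta> > 0" and "k' \<le> k"
    and leaves: "dyadic_cell org \<Delta> k i j \<in> leaf_cells n m p \<delta> U \<Delta> org"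
                "dyadic_cell org \<Delta> k' i' j' \<in> leaf_cells n m p \<delta> U \<Delta> org"
    and x: "x \<in> cell_sq (dyadic_cell org \<Delta> k i j)" "x \<in> cell_sq (dyadic_cell org \<Delta> k' i' j')"
  shows "dyadic_cell org \<Delta> k' i' j' = dyadic_cell org \<Delta> k i j"
proof -
  have idx: "i' = i div 2 ^ (k - k') \<and> j' = j div 2 ^ (k - k')"
    using dyadic_cell_overlap[OF assms(1,2) x] .
  have "dyadic_cell org \<Delta> k i j \<in> qtree n m p \<delta> U \<Delta> org"
    using leaves(1) by (simp add: leaf_cells_def)
  with idx have "k' < k \<longrightarrow> splits n m p \<delta> (cell_sq (dyadic_cell org \<Delta> k' i' j'))"
    using qtree_ancestor[OF assms(1) _ assms(2)] by simp
  with leaves(2) assms(2) have "k' = k"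
    by (simp add: leaf_cells_def)
  with idx show ?thesis
    by simp
qed

lemma leaf_cells_disjoint:
  assumes "\<Delta> > 0"
  shows "disjoint_family_on cell_sq (leaf_cells n m p \<delta> U \<Delta> org)"
  unfolding disjoint_family_on_def
proof (intro ballI impI)
  fix q q' assume q: "q \<in> leaf_cells n m p \<delta> U \<Delta> org" and q': "q' \<in> leaf_cells n m p \<delta> U \<Delta> org"
    and "q \<noteq> q'"
  have "q \<in> qtree n m p \<delta> U \<Delta> org" "q' \<in> qtree n m p \<delta> U \<Delta> org"
    using q q' by (simp_all add: leaf_cells_def)
  then obtain k i j k' i' j' where rep: "q = dyadic_cell org \<Delta> k i j" "q' = dyadic_cell org \<Delta> k' i' j'"
    by (blast dest: qtree_dyadic)
  show "cell_sq q \<inter> cell_sq q' = {}"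
  proof (rule ccontr)
    assume "cell_sq q \<inter> cell_sq q' \<noteq> {}"
    then obtain x where x: "x \<in> cell_sq q" "x \<in> cell_sq q'"
      by blast
    note leaves = q[unfolded rep(1)] q'[unfolded rep(2)]
    note xs = x[unfolded rep]
    from nat_le_linear[of k k'] have "q = q'"
    proof
      assume "k \<le> k'"
      from leaf_cells_nested_eq[OF assms this leaves(2,1) xs(2,1)] show "q = q'"
        unfolding rep by simp
    next
      assume "k' \<le> k"
      from leaf_cells_nested_eq[OF assms this leaves xs] show "q = q'"
        unfolding rep by simp
    qed
    with \<open>q \<noteq> q'\<close> show False ..
  qed
qed

lemma leaf_cells_side_pos:
  "\<Delta> > 0 \<Longrightarrow> q \<in> leaf_cells n m p \<delta> U \<Delta> org \<Longrightarrow> snd q > 0"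
  using qtree_dyadic unfolding leaf_cells_def dyadic_cell_def by fastforce

lemma dist_le_in_sq:
  assumes "x \<in> sq a l" and "y \<in> sq a l"
  shows "dist x y \<le> 2 * l"
proof -
  have "\<bar>fst x - fst y\<bar> < l" "\<bar>snd x - snd y\<bar> < l"
    using assms by (auto simp: sq_def)
  moreover have "dist x y \<le> \<bar>fst x - fst y\<bar> + \<bar>snd x - snd y\<bar>"
    using sqrt_sum_squares_le_sum_abs[of "fst x - fst y" "snd x - snd y"]
    by (simp add: dist_prod_def dist_real_def)
  ultimately show ?thesis
    by linarith
qed

lemma near_cell_small_sq:
  assumes "x \<in> sq a l" and "l < (r - dist y x) / 2"
  shows "near_cell y r (sq a l)"
proof -
  have "dist y z \<le> r" if "z \<in> sq a l" for z
    using dist_le_in_sq[OF assms(1) that] dist_triangle[of y z x] assms(2) by (simp add: field_simps)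
  then show ?thesis
    unfolding near_cell_def by blast
qed

lemma not_ratio_exceeds_small_sq:
  assumes "0 < \<delta>" and "r \<le> dist y x" and x: "x \<in> sq a l" and l: "l < \<delta> * r / (2 * (2 + \<delta>))"
  shows "\<not> ratio_exceeds y \<delta> (sq a l)"
proof -
  define d where "d = dist y x"
  have "d - 2 * l \<le> dist y z \<and> dist y z \<le> d + 2 * l" if "z \<in> sq a l" for z
    using dist_le_in_sq[OF x that] dist_triangle[of y z x] dist_triangle[of y x z]
    by (simp add: d_def dist_commute)
  then have "(SUP z\<in>sq a l. dist y z) \<le> d + 2 * l" "d - 2 * l \<le> (INF z\<in>sq a l. dist y z)"
    using x by (auto intro!: cSUP_least cINF_greatest)
  moreover have "d + 2 * l \<le> (1 + \<delta>) * (d - 2 * l)"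
  proof -
    have "2 * l * (2 + \<delta>) \<le> \<delta> * r"
      using l assms(1) by (simp add: field_simps)
    moreover have "\<delta> * r \<le> \<delta> * d"
      using assms(1,2) by (simp add: d_def)
    ultimately show ?thesis
      by (simp add: algebra_simps)
  qed
  ultimately show ?thesis
    unfolding ratio_exceeds_def using assms(1) by (smt (verit) mult_left_mono)
qed

lemma small_cells_not_split:
  assumes "0 < n" and "0 < m" and "0 < \<delta>"
  shows "\<exists>\<epsilon>>0. \<forall>a l. x \<in> sq a l \<longrightarrow> l < \<epsilon> \<longrightarrow> \<not> splits n m p \<delta> (sq a l)"
proof -
  define r where "r = \<delta> / sqrt (real n * real m)"
  have "r > 0"
    using assms by (simp add: r_def)
  show ?thesis
  proof (cases "\<exists>i<n. dist (p i) x < r")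
    case True
    then obtain i where i: "i < n" "dist (p i) x < r"
      by blast
    show ?thesis
    proof (intro exI[of _ "(r - dist (p i) x) / 2"] conjI allI impI)
      fix a l assume "x \<in> sq a l" "l < (r - dist (p i) x) / 2"
      with i near_cell_small_sq show "\<not> splits n m p \<delta> (sq a l)"
        unfolding splits_def r_def by blast
    qed (use i in simp)
  next
    case False
    show ?thesis
    proof (intro exI[of _ "\<delta> * r / (2 * (2 + \<delta>))"] conjI allI impI)
      show "\<delta> * r / (2 * (2 + \<delta>)) > 0"
        using \<open>r > 0\<close> assms by simp
      fix a l assume "x \<in> sq a l" "l < \<delta> * r / (2 * (2 + \<delta>))"
      with False not_ratio_exceeds_small_sq[OF assms(3)] show "\<not> splits n m p \<delta> (sq a l)"
        unfolding splits_def by (meson not_le)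
    qed
  qed
qed

lemma dyadic_cells_in_qtree:
  assumes "\<Delta> > 0" and "x \<in> U"
    and all_split: "\<forall>q\<in>qtree n m p \<delta> U \<Delta> org. x \<in> cell_sq q \<longrightarrow> splits n m p \<delta> (cell_sq q)"
  shows "dyadic_cell org \<Delta> k (dyadic_index \<Delta> k (fst org) (fst x)) (dyadic_index \<Delta> k (snd org) (snd x))
           \<in> qtree n m p \<delta> U \<Delta> org"
    (is "dyadic_cell org \<Delta> k (?i k) (?j k) \<in> _")
proof (induction k)
  case 0
  have "x \<in> cell_sq (dyadic_cell org \<Delta> 0 (?i 0) (?j 0))"
    using assms(1) by (simp add: mem_dyadic_cell)
  with assms(2) have "sq (fst org + of_int (?i 0) * \<Delta>, snd org + of_int (?j 0) * \<Delta>) \<Delta> \<inter> U \<noteq> {}"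
    by (auto simp: dyadic_cell_def)
  then show ?case
    using qtree.grid by (simp add: dyadic_cell_def)
next
  case (Suc k)
  define e where "e = ?i (Suc k) - 2 * ?i k"
  define e' where "e' = ?j (Suc k) - 2 * ?j k"
  have "?i k = ?i (Suc k) div 2" "?j k = ?j (Suc k) div 2"
    using dyadic_index_coarsen[of k "Suc k"] by simp_all
  then have e01: "e \<in> {0, 1}" "e' \<in> {0, 1}"
    unfolding e_def e'_def by auto
  obtain a l where parent: "(a, l) = dyadic_cell org \<Delta> k (?i k) (?j k)"
    by (metis prod.collapse)
  have "x \<in> sq a l"
    using assms(1) parent by (metis fst_conv snd_conv mem_dyadic_cell)
  with Suc.IH parent all_split have "splits n m p \<delta> (sq a l)"
    by (metis fst_conv snd_conv)
  with Suc.IH parent e01 have "((fst a + of_int e * (l / 2), snd a + of_int e' * (l / 2)), l / 2)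
                              \<in> qtree n m p \<delta> U \<Delta> org"
    by (intro qtree.child) auto
  then show ?case
    unfolding dyadic_cell_child[OF parent] by (simp add: e_def e'_def)
qed

lemma leaf_cells_cover:
  assumes "\<Delta> > 0" and "0 < n" and "0 < m" and "0 < \<delta>" and "x \<in> U"
  shows "\<exists>q\<in>leaf_cells n m p \<delta> U \<Delta> org. x \<in> cell_sq q"
proof (rule ccontr)
  assume "\<not> ?thesis"
  then have all_split: "\<forall>q\<in>qtree n m p \<delta> U \<Delta> org. x \<in> cell_sq q \<longrightarrow> splits n m p \<delta> (cell_sq q)"
    unfolding leaf_cells_def by blast
  obtain \<epsilon> where "\<epsilon> > 0" and small: "\<forall>a l. x \<in> sq a l \<longrightarrow> l < \<epsilon> \<longrightarrow> \<not> splits n m p \<delta> (sq a l)"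
    using small_cells_not_split[OF assms(2-4)] by blast
  obtain k where "\<Delta> / \<epsilon> < 2 ^ k"
    using real_arch_pow[of 2 "\<Delta> / \<epsilon>"] by auto
  then have "\<Delta> / 2 ^ k < \<epsilon>"
    using \<open>\<epsilon> > 0\<close> by (simp add: field_simps)
  define q where "q = dyadic_cell org \<Delta> k (dyadic_index \<Delta> k (fst org) (fst x)) (dyadic_index \<Delta> k (snd org) (snd x))"
  have "q \<in> qtree n m p \<delta> U \<Delta> org" "x \<in> cell_sq q"
    using dyadic_cells_in_qtree[OF assms(1,5) all_split] assms(1) by (simp_all add: q_def mem_dyadic_cell)
  moreover have "snd q < \<epsilon>"
    using \<open>\<Delta> / 2 ^ k < \<epsilon>\<close> by (simp add: q_def dyadic_cell_def)
  ultimately show False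
    using all_split small by blast
qed

section \<open>Triangles and squares as measurable sets\<close>

lemma tri_compact: "compact (tri u v w)"
  unfolding tri_def by (simp add: finite_imp_compact_convex_hull)

lemma tri_sets [measurable]: "tri u v w \<in> sets lborel"
  unfolding sets_lborel using tri_compact compact_imp_closed borel_closed by blast

lemma emeasure_tri_finite: "emeasure lborel (tri u v w \<inter> A) < \<infinity>"
proof -
  have "emeasure lborel (tri u v w \<inter> A) \<le> emeasure lborel (tri u v w)"
    by (rule emeasure_mono[OF _ tri_sets]) auto
  also have "\<dots> < \<infinity>"
    using emeasure_bounded_finite[OF compact_imp_bounded[OF tri_compact]] by simp
  finally show ?thesis .
qed

lemma sq_sets [measurable]: "sq a l \<in> sets lborel"
  by (simp add: sq_def borel_Times)

lemma bounded_sq: "bounded (sq a l)"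
proof -
  have "sq a l \<subseteq> cbox a (fst a + l, snd a + l)"
    by (cases a) (auto simp: sq_def cbox_Pair_eq)
  then show ?thesis
    by (rule bounded_subset[OF bounded_cbox])
qed

lemma integrable_indicator_tri_Int:
  assumes "A \<in> sets lborel"
  shows "integrable lborel (indicator (tri u v w \<inter> A) :: pt \<Rightarrow> real)"
proof (rule integrable_real_indicator)
  show "tri u v w \<inter> A \<in> sets lborel"
    using assms by (intro sets.Int tri_sets)
qed (rule emeasure_tri_finite)

lemma compact_tri_union: "compact (tri_union m a b c)"
  unfolding tri_union_def by (intro compact_UN tri_compact) simp

lemma tri_dens_measurable [measurable]: "tri_dens m a b c \<in> borel_measurable lborel"
  unfolding tri_dens_def by measurable

lemma tri_dens_nonneg: "0 \<le> tri_dens m a b c x"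
  unfolding tri_dens_def by (simp add: sum_nonneg)

lemma tri_dens_le: "tri_dens m a b c x \<le> real m"
  unfolding tri_dens_def using sum_mono[of "{..<m}" "\<lambda>j. indicator (tri (a j) (b j) (c j)) x" "\<lambda>_. 1 :: real"]
  by simp

lemma tri_dens_outside: "x \<notin> tri_union m a b c \<Longrightarrow> tri_dens m a b c x = 0"
  unfolding tri_dens_def tri_union_def by (simp add: indicator_def)

lemma integrable_tri_dens_indicator:
  "A \<in> sets lborel \<Longrightarrow> integrable lborel (\<lambda>x. tri_dens m a b c x * indicator A x)"
  unfolding tri_dens_def sum_distrib_right
  by (intro Bochner_Integration.integrable_sum)
     (simp add: indicator_inter_arith[symmetric] integrable_indicator_tri_Int)

lemma cell_mass_eq_integral:
  "cell_mass m a b c q = (LINT x|lborel. tri_dens m a b c x * indicator (cell_sq q) x)"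
  unfolding cell_mass_def tri_dens_def sum_distrib_right
  by (subst Bochner_Integration.integral_sum)
     (simp_all add: indicator_inter_arith[symmetric] integrable_indicator_tri_Int[OF sq_sets])

lemma tri_dens_mass_le:
  assumes "A \<in> sets lborel" and "emeasure lborel A < \<infinity>"
  shows "(LINT x|lborel. tri_dens m a b c x * indicator A x) \<le> real m * measure lborel A"
proof -
  have "(LINT x|lborel. tri_dens m a b c x * indicator A x) \<le> (LINT x|lborel. real m * indicator A x)"
    using assms tri_dens_le
    by (intro integral_mono integrable_tri_dens_indicator integrable_mult_right integrable_real_indicator)
       (auto simp: indicator_def)
  then show ?thesis
    using assms by simp
qed

lemma longest_edge_pos:
  assumes "(\<Sum>j<m. measure lborel (tri (a j) (b j) (c j))) = 1"
  shows "longest_edge m a b c > 0"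
proof (rule ccontr)
  assume "\<not> longest_edge m a b c > 0"
  moreover have "dist (a j) (b j) \<le> longest_edge m a b c" "dist (b j) (c j) \<le> longest_edge m a b c"
    if "j < m" for j
    unfolding longest_edge_def using that by (auto intro!: Max_ge)
  ultimately have "a j = b j \<and> b j = c j" if "j < m" for j
    using that by (metis dist_le_zero_iff not_less order_trans)
  then have "tri (a j) (b j) (c j) = {a j}" if "j < m" for j
    using that by (simp add: tri_def)
  with assms show False
    by simp
qed

section \<open>Distances between a point and a cell\<close>

text \<open>The furthest distance of the splitting rule; the closest one is the library's infdist.\<close>

definition max_dist :: "'a::metric_space \<Rightarrow> 'a set \<Rightarrow> real" where
  "max_dist x C = (SUP y\<in>C. dist x y)"

lemma dist_le_max_dist:
  assumes "bounded C" and "y \<in> C"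
  shows "dist x y \<le> max_dist x C"
proof -
  obtain e where "\<forall>y\<in>C. dist x y \<le> e"
    using assms(1) bounded_any_center by blast
  with assms(2) show ?thesis
    unfolding max_dist_def by (auto intro!: cSUP_upper bdd_aboveI2)
qed

lemma max_dist_le: "C \<noteq> {} \<Longrightarrow> (\<And>y. y \<in> C \<Longrightarrow> dist x y \<le> M) \<Longrightarrow> max_dist x C \<le> M"
  unfolding max_dist_def by (rule cSUP_least)

lemma dist_closure_le_max_dist:
  assumes "bounded C" and "t \<in> closure C"
  shows "dist x t \<le> max_dist x C"
proof -
  have "closure C \<subseteq> {y. dist x y \<le> max_dist x C}"
    using assms(1) by (intro closure_minimal closed_Collect_le continuous_intros) (auto intro: dist_le_max_dist)
  with assms(2) show ?thesis
    by blast
qed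

lemma infdist_le_dist_closure: "t \<in> closure C \<Longrightarrow> infdist x C \<le> dist x t"
  using infdist_triangle[of x C t] in_closure_iff_infdist_zero[where x=t and A=C]
  by (cases "C = {}") (auto simp: dist_commute)

lemma max_dist_le_infdist_near:
  assumes "C \<noteq> {}" and "\<forall>y\<in>C. dist z y \<le> r"
  shows "max_dist x C \<le> infdist x C + 2 * r"
proof -
  have "dist x y \<le> dist x y' + 2 * r" if "y \<in> C" "y' \<in> C" for y y'
  proof -
    have "dist z y \<le> r" "dist z y' \<le> r"
      using assms(2) that by auto
    moreover have "dist y' y \<le> dist z y' + dist z y"
      using dist_triangle[of y' y z] by (simp add: dist_commute)
    ultimately show ?thesis
      using dist_triangle[of x y y'] by linarith
  qed
  then have "max_dist x C - 2 * r \<le> dist x y'" if "y' \<in> C" for y'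
    using assms(1) that max_dist_le[of C x "dist x y' + 2 * r"] by auto
  then have "max_dist x C - 2 * r \<le> infdist x C"
    using assms(1) by (auto simp: infdist_notempty intro!: cINF_greatest)
  then show ?thesis
    by simp
qed

lemma max_dist_le_infdist_ratio:
  assumes "sq a l \<noteq> {}" and "\<not> ratio_exceeds x \<delta> (sq a l)"
  shows "max_dist x (sq a l) \<le> (1 + \<delta>) * infdist x (sq a l)"
  using assms by (simp add: ratio_exceeds_def max_dist_def infdist_notempty)

lemma closure_sq:
  assumes "0 < l"
  shows "closure (sq a l) = csq a l"
  using assms by (simp add: sq_def csq_def closure_Times)

section \<open>Transport plans restricted to cells\<close>

definition cell_partition :: "(pt \<times> real) set \<Rightarrow> pt set \<Rightarrow> bool" where
  "cell_partition Q U \<longleftrightarrow> finite Q \<and> disjoint_family_on cell_sq Q \<and> U \<subseteq> (\<Union>q\<in>Q. cell_sq q)"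

lemma leaf_cells_partition:
  assumes "\<Delta> > 0" and "0 < n" and "0 < m" and "0 < \<delta>" and "finite (leaf_cells n m p \<delta> U \<Delta> org)"
  shows "cell_partition (leaf_cells n m p \<delta> U \<Delta> org) U"
proof -
  have "U \<subseteq> (\<Union>q\<in>leaf_cells n m p \<delta> U \<Delta> org. cell_sq q)"
    using leaf_cells_cover[OF assms(1-4)] by blast
  with assms(5) leaf_cells_disjoint[OF assms(1)] show ?thesis
    unfolding cell_partition_def by blast
qed

definition cell_plan :: "(nat \<Rightarrow> pt \<Rightarrow> real) \<Rightarrow> nat \<Rightarrow> pt \<times> real \<Rightarrow> real" where
  "cell_plan g i q = (LINT x|lborel. g i x * indicator (cell_sq q) x)"

lemma is_planD:
  assumes "is_plan n w dens g" and "i < n"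
  shows "0 \<le> g i x" and "integrable lborel (g i)" and "(LINT x|lborel. g i x) = w i"
  using assms unfolding is_plan_def by blast+

lemma plan_AE_zero_outside:
  assumes g: "is_plan n w (tri_dens m a b c) g" and "i < n"
  shows "AE x in lborel. x \<notin> tri_union m a b c \<longrightarrow> g i x = 0"
  using g unfolding is_plan_def
proof (elim conjE AE_mp, intro AE_I2 impI)
  fix x assume "(\<Sum>i<n. g i x) = tri_dens m a b c x" and "x \<notin> tri_union m a b c"
  then have "(\<Sum>i<n. g i x) = 0"
    by (simp add: tri_dens_outside)
  with \<open>i < n\<close> show "g i x = 0"
    using sum_nonneg_eq_0_iff[of "{..<n}" "\<lambda>j. g j x"] is_planD(1)[OF g] by auto
qed

lemma integrable_plan_dist:
  assumes g: "is_plan n w (tri_dens m a b c) g" and "i < n"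
  shows "integrable lborel (\<lambda>x. g i x * dist x y)"
proof -
  obtain M where M: "\<forall>x\<in>tri_union m a b c. dist y x \<le> M"
    using compact_imp_bounded[OF compact_tri_union] bounded_any_center by blast
  note [measurable] = borel_measurable_integrable[OF is_planD(2)[OF g \<open>i < n\<close>]]
  show ?thesis
  proof (rule Bochner_Integration.integrable_bound)
    show "integrable lborel (\<lambda>x. M * g i x)"
      using is_planD(2)[OF g \<open>i < n\<close>] by simp
    show "AE x in lborel. norm (g i x * dist x y) \<le> norm (M * g i x)"
      using plan_AE_zero_outside[OF g \<open>i < n\<close>]
    proof (rule AE_mp, intro AE_I2 impI)
      fix x assume "x \<notin> tri_union m a b c \<longrightarrow> g i x = 0"
      moreover have g_nonneg: "0 \<le> g i x"
        using is_planD(1)[OF g \<open>i < n\<close>] .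
      ultimately have "g i x * dist x y \<le> g i x * \<bar>M\<bar>"
        using M by (cases "x \<in> tri_union m a b c") (auto simp: dist_commute intro!: mult_left_mono)
      with g_nonneg show "norm (g i x * dist x y) \<le> norm (M * g i x)"
        by (simp add: abs_mult mult.commute)
    qed
  qed measurable
qed

lemma plan_partition_AE:
  assumes Q: "cell_partition Q (tri_union m a b c)" and g: "is_plan n w (tri_dens m a b c) g" and "i < n"
  shows "AE x in lborel. (\<Sum>q\<in>Q. g i x * indicator (cell_sq q) x) = g i x"
  using plan_AE_zero_outside[OF g \<open>i < n\<close>]
proof (rule AE_mp, intro AE_I2 impI)
  fix x assume outside: "x \<notin> tri_union m a b c \<longrightarrow> g i x = 0"
  show "(\<Sum>q\<in>Q. g i x * indicator (cell_sq q) x) = g i x"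
  proof (cases "x \<in> tri_union m a b c")
    case True
    with Q obtain q where "q \<in> Q" "x \<in> cell_sq q"
      unfolding cell_partition_def by blast
    with Q show ?thesis
      unfolding cell_partition_def by (intro sum_indicator_disjoint_family) auto
  qed (use outside in simp)
qed

lemma sum_plan_restrict_eq:
  assumes g: "is_plan n w dens g" and A: "A \<in> sets lborel" and [measurable]: "dens \<in> borel_measurable lborel"
  shows "(\<Sum>i<n. LINT x|lborel. g i x * indicator A x) = (LINT x|lborel. dens x * indicator A x)"
proof -
  have int: "integrable lborel (\<lambda>x. g i x * indicator A x)" if "i < n" for i
    using integrable_real_mult_indicator[OF A is_planD(2)[OF g that]] .
  have "(\<Sum>i<n. LINT x|lborel. g i x * indicator A x) = (LINT x|lborel. (\<Sum>i<n. g i x * indicator A x))"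
    using int by (intro Bochner_Integration.integral_sum[symmetric]) simp
  also have "\<dots> = (LINT x|lborel. dens x * indicator A x)"
  proof (rule integral_cong_AE)
    show "(\<lambda>x. \<Sum>i<n. g i x * indicator A x) \<in> borel_measurable lborel"
      using int by (intro borel_measurable_sum borel_measurable_integrable) simp
    show "AE x in lborel. (\<Sum>i<n. g i x * indicator A x) = dens x * indicator A x"
      using g unfolding is_plan_def by (auto simp: sum_distrib_right[symmetric])
  qed (use A in measurable)
  finally show ?thesis .
qed

lemma cell_plan_is_disc_plan:
  assumes Q: "cell_partition Q (tri_union m a b c)" and g: "is_plan n w (tri_dens m a b c) g"
  shows "is_disc_plan n w Q (cell_mass m a b c) (cell_plan g)"
  unfolding is_disc_plan_def
proof (intro conjI allI impI ballI)
  fix i q assume "i < n"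
  then show "0 \<le> cell_plan g i q"
    unfolding cell_plan_def using is_planD(1)[OF g] by simp
next
  fix i assume "i < n"
  note g_int = is_planD(2)[OF g \<open>i < n\<close>]
  note [measurable] = borel_measurable_integrable[OF g_int]
  have "(\<Sum>q\<in>Q. cell_plan g i q) = (LINT x|lborel. (\<Sum>q\<in>Q. g i x * indicator (cell_sq q) x))"
    unfolding cell_plan_def
    by (rule Bochner_Integration.integral_sum[symmetric]) (rule integrable_real_mult_indicator[OF sq_sets g_int])
  also have "\<dots> = (LINT x|lborel. g i x)"
    by (rule integral_cong_AE) (simp_all add: plan_partition_AE[OF Q g \<open>i < n\<close>])
  finally show "(\<Sum>q\<in>Q. cell_plan g i q) = w i"
    using is_planD(3)[OF g \<open>i < n\<close>] by simp
next
  fix q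
  show "(\<Sum>i<n. cell_plan g i q) = cell_mass m a b c q"
    unfolding cell_plan_def cell_mass_eq_integral
    by (rule sum_plan_restrict_eq[OF g sq_sets tri_dens_measurable])
qed

lemma cell_plan_infdist_le:
  assumes Q: "cell_partition Q (tri_union m a b c)" and g: "is_plan n w (tri_dens m a b c) g"
  shows "(\<Sum>i<n. \<Sum>q\<in>Q. cell_plan g i q * infdist (p i) (cell_sq q)) \<le> plan_cost n p g"
  unfolding plan_cost_def
proof (rule sum_mono)
  fix i assume "i \<in> {..<n}"
  then have "i < n" by simp
  note g_dist_int = integrable_plan_dist[OF g \<open>i < n\<close>]
  note [measurable] = borel_measurable_integrable[OF is_planD(2)[OF g \<open>i < n\<close>]]
  have cell_int: "integrable lborel (\<lambda>x. g i x * dist x (p i) * indicator (cell_sq q) x)" for q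
    using integrable_real_mult_indicator[OF sq_sets g_dist_int] .
  have "cell_plan g i q * infdist (p i) (cell_sq q) \<le> (LINT x|lborel. g i x * dist x (p i) * indicator (cell_sq q) x)"
    for q
  proof -
    have "cell_plan g i q * infdist (p i) (cell_sq q)
          = (LINT x|lborel. infdist (p i) (cell_sq q) * (g i x * indicator (cell_sq q) x))"
      unfolding cell_plan_def by (simp add: mult.commute)
    also have "\<dots> \<le> (LINT x|lborel. g i x * dist x (p i) * indicator (cell_sq q) x)"
      using cell_int is_planD(1)[OF g \<open>i < n\<close>]
        integrable_real_mult_indicator[OF sq_sets is_planD(2)[OF g \<open>i < n\<close>]]
      by (intro integral_mono)
         (auto simp: indicator_def infdist_le dist_commute mult_left_mono mult.commute)
    finally show ?thesis .
  qed
  then have "(\<Sum>q\<in>Q. cell_plan g i q * infdist (p i) (cell_sq q))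
             \<le> (\<Sum>q\<in>Q. LINT x|lborel. g i x * dist x (p i) * indicator (cell_sq q) x)"
    by (rule sum_mono)
  also have "\<dots> = (LINT x|lborel. (\<Sum>q\<in>Q. g i x * dist x (p i) * indicator (cell_sq q) x))"
    using cell_int by (rule Bochner_Integration.integral_sum[symmetric])
  also have "\<dots> = (LINT x|lborel. g i x * dist x (p i))"
    using plan_partition_AE[OF Q g \<open>i < n\<close>]
    by (intro integral_cong_AE) (auto simp: mult_ac sum_distrib_left[symmetric])
  finally show "(\<Sum>q\<in>Q. cell_plan g i q * infdist (p i) (cell_sq q)) \<le> (LINT x|lborel. g i x * dist x (p i))" .
qed

section \<open>Cost of the spread plan\<close>

lemma integrable_tri_dens_dist: "integrable lborel (\<lambda>x. tri_dens m a b c x * dist x y)"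
  unfolding tri_dens_def sum_distrib_right
  using borel_integrable_compact[OF tri_compact continuous_on_dist[OF continuous_on_id continuous_on_const]]
  by (intro Bochner_Integration.integrable_sum) simp

lemma integrable_tri_dens_indicator_dist:
  assumes "A \<in> sets lborel"
  shows "integrable lborel (\<lambda>x. tri_dens m a b c x * indicator A x * dist x y)"
  using integrable_real_mult_indicator[OF assms integrable_tri_dens_dist[of m a b c y]]
  by (simp add: mult_ac)

lemma max_dist_sq_nonneg:
  assumes "0 < l"
  shows "0 \<le> max_dist x (sq a l)"
proof -
  have "a \<in> sq a l"
    using assms by (cases a) (simp add: sq_def)
  then show ?thesis
    using dist_le_max_dist[OF bounded_sq] zero_le_dist order_trans by blast
qed

lemma cell_dist_integral_le:
  assumes "0 < snd q"
  shows "(LINT x|lborel. tri_dens m a b c x * indicator (cell_sq q) x * dist x y)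
           \<le> max_dist y (cell_sq q) * cell_mass m a b c q"
proof -
  have "(LINT x|lborel. tri_dens m a b c x * indicator (cell_sq q) x * dist x y)
        \<le> (LINT x|lborel. max_dist y (cell_sq q) * (tri_dens m a b c x * indicator (cell_sq q) x))"
  proof (rule integral_mono)
    show "integrable lborel (\<lambda>x. tri_dens m a b c x * indicator (cell_sq q) x * dist x y)"
      by (rule integrable_tri_dens_indicator_dist[OF sq_sets])
    show "integrable lborel (\<lambda>x. max_dist y (cell_sq q) * (tri_dens m a b c x * indicator (cell_sq q) x))"
      by (intro integrable_mult_right integrable_tri_dens_indicator sq_sets)
    show "tri_dens m a b c x * indicator (cell_sq q) x * dist x y
          \<le> max_dist y (cell_sq q) * (tri_dens m a b c x * indicator (cell_sq q) x)" for x
    proof (cases "x \<in> cell_sq q")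
      case True
      then have "dist x y \<le> max_dist y (cell_sq q)"
        using dist_le_max_dist[OF bounded_sq] by (simp add: dist_commute)
      from mult_right_mono[OF this tri_dens_nonneg] True show ?thesis
        by (simp add: mult.commute)
    qed simp
  qed
  then show ?thesis
    by (simp add: cell_mass_eq_integral)
qed

lemma spread_plan_cost_le:
  assumes "finite Q" and sides: "\<forall>q\<in>Q. 0 < snd q" and \<nu>: "\<forall>i<n. \<forall>q\<in>Q. 0 \<le> \<nu> i q"
  shows "plan_cost n p (spread_plan m a b c Q \<nu>) \<le> (\<Sum>i<n. \<Sum>q\<in>Q. \<nu> i q * max_dist (p i) (cell_sq q))"
  unfolding plan_cost_def
proof (rule sum_mono)
  fix i assume "i \<in> {..<n}"
  define M where "M q = cell_mass m a b c q" for q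
  define I where "I q = (LINT x|lborel. tri_dens m a b c x * indicator (cell_sq q) x * dist x (p i))" for q
  have "(\<lambda>x. spread_plan m a b c Q \<nu> i x * dist x (p i))
        = (\<lambda>x. \<Sum>q\<in>Q. \<nu> i q / M q * (tri_dens m a b c x * indicator (cell_sq q) x * dist x (p i)))"
    unfolding spread_plan_def M_def sum_distrib_right by (simp add: mult_ac)
  moreover have "integrable lborel (\<lambda>x. tri_dens m a b c x * indicator (cell_sq q) x * dist x (p i))" for q
    by (rule integrable_tri_dens_indicator_dist[OF sq_sets])
  ultimately have "(LINT x|lborel. spread_plan m a b c Q \<nu> i x * dist x (p i)) = (\<Sum>q\<in>Q. \<nu> i q / M q * I q)"
    unfolding I_def by (simp add: Bochner_Integration.integral_sum)
  also have "\<dots> \<le> (\<Sum>q\<in>Q. \<nu> i q * max_dist (p i) (cell_sq q))"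
  proof (rule sum_mono)
    fix q assume "q \<in> Q"
    have I: "I q \<le> max_dist (p i) (cell_sq q) * M q" and "0 \<le> max_dist (p i) (cell_sq q)"
      using cell_dist_integral_le max_dist_sq_nonneg sides \<open>q \<in> Q\<close> unfolding I_def M_def by auto
    moreover have "0 \<le> \<nu> i q" "0 \<le> M q"
      using \<nu> \<open>i \<in> {..<n}\<close> \<open>q \<in> Q\<close> unfolding M_def cell_mass_def by (auto intro: sum_nonneg)
    ultimately show "\<nu> i q / M q * I q \<le> \<nu> i q * max_dist (p i) (cell_sq q)"
    proof (cases "M q = 0")
      case False
      have "\<nu> i q / M q * I q \<le> \<nu> i q / M q * (max_dist (p i) (cell_sq q) * M q)"
        using I \<open>0 \<le> \<nu> i q\<close> \<open>0 \<le> M q\<close> by (intro mult_left_mono) auto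
      with False show ?thesis
        by simp
    qed simp
  qed
  finally show "(LINT x|lborel. spread_plan m a b c Q \<nu> i x * dist x (p i))
                \<le> (\<Sum>q\<in>Q. \<nu> i q * max_dist (p i) (cell_sq q))" .
qed

lemma disc_plan_sum_affine_le:
  assumes \<nu>: "is_disc_plan n w Q wt \<nu>" and XY: "\<forall>i<n. \<forall>q\<in>Q. X i q \<le> c * Y i q + e q"
  shows "(\<Sum>i<n. \<Sum>q\<in>Q. \<nu> i q * X i q) \<le> c * (\<Sum>i<n. \<Sum>q\<in>Q. \<nu> i q * Y i q) + (\<Sum>q\<in>Q. e q * wt q)"
proof -
  have "\<nu> i q * X i q \<le> c * (\<nu> i q * Y i q) + e q * \<nu> i q" if "i < n" "q \<in> Q" for i q
  proof -
    have "\<nu> i q * X i q \<le> \<nu> i q * (c * Y i q + e q)"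
      using \<nu> XY that unfolding is_disc_plan_def by (intro mult_left_mono) auto
    then show ?thesis
      by (simp add: algebra_simps)
  qed
  then have "(\<Sum>i<n. \<Sum>q\<in>Q. \<nu> i q * X i q) \<le> (\<Sum>i<n. \<Sum>q\<in>Q. c * (\<nu> i q * Y i q) + e q * \<nu> i q)"
    by (intro sum_mono) auto
  also have "\<dots> = c * (\<Sum>i<n. \<Sum>q\<in>Q. \<nu> i q * Y i q) + (\<Sum>q\<in>Q. e q * (\<Sum>i<n. \<nu> i q))"
    by (simp add: sum.distrib sum_distrib_left sum.swap[of _ Q])
  also have "(\<Sum>q\<in>Q. e q * (\<Sum>i<n. \<nu> i q)) = (\<Sum>q\<in>Q. e q * wt q)"
    using \<nu> unfolding is_disc_plan_def by simp
  finally show ?thesis .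
qed

lemma disc_cost_cell_plan_le:
  assumes Q: "cell_partition Q (tri_union m a b c)" and g: "is_plan n w (tri_dens m a b c) g"
    and "0 \<le> \<delta>" and cells: "\<forall>i<n. \<forall>q\<in>Q. dist (p i) (t q) \<le> (1 + \<delta>) * infdist (p i) (cell_sq q) + e q"
  shows "disc_cost n p Q t (cell_plan g) \<le> (1 + \<delta>) * plan_cost n p g + (\<Sum>q\<in>Q. e q * cell_mass m a b c q)"
proof -
  have "disc_cost n p Q t (cell_plan g)
        \<le> (1 + \<delta>) * (\<Sum>i<n. \<Sum>q\<in>Q. cell_plan g i q * infdist (p i) (cell_sq q))
          + (\<Sum>q\<in>Q. e q * cell_mass m a b c q)"
    unfolding disc_cost_def by (rule disc_plan_sum_affine_le[OF cell_plan_is_disc_plan[OF Q g] cells])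
  also have "\<dots> \<le> (1 + \<delta>) * plan_cost n p g + (\<Sum>q\<in>Q. e q * cell_mass m a b c q)"
    using cell_plan_infdist_le[OF Q g] \<open>0 \<le> \<delta>\<close> by simp
  finally show ?thesis .
qed

lemma spread_plan_cost_bound:
  assumes Q: "cell_partition Q (tri_union m a b c)" and sides: "\<forall>q\<in>Q. 0 < snd q"
    and t: "\<forall>q\<in>Q. t q \<in> closure (cell_sq q)"
    and \<nu>: "is_disc_plan n w Q (cell_mass m a b c) \<nu>"
    and \<nu>_opt: "\<forall>\<nu>'. is_disc_plan n w Q (cell_mass m a b c) \<nu>' \<longrightarrow> disc_cost n p Q t \<nu> \<le> disc_cost n p Q t \<nu>'"
    and g: "is_plan n w (tri_dens m a b c) g" and "0 \<le> \<delta>"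
    and cells: "\<forall>i<n. \<forall>q\<in>Q. max_dist (p i) (cell_sq q) \<le> (1 + \<delta>) * infdist (p i) (cell_sq q) + e q"
  shows "plan_cost n p (spread_plan m a b c Q \<nu>)
           \<le> (1 + \<delta>)\<^sup>2 * plan_cost n p g + (2 + \<delta>) * (\<Sum>q\<in>Q. e q * cell_mass m a b c q)"
proof -
  let ?E = "\<Sum>q\<in>Q. e q * cell_mass m a b c q"
  have "plan_cost n p (spread_plan m a b c Q \<nu>) \<le> (\<Sum>i<n. \<Sum>q\<in>Q. \<nu> i q * max_dist (p i) (cell_sq q))"
    using Q sides \<nu> unfolding cell_partition_def is_disc_plan_def by (intro spread_plan_cost_le) auto
  also have "\<dots> \<le> (1 + \<delta>) * disc_cost n p Q t \<nu> + ?E"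
    unfolding disc_cost_def
  proof (rule disc_plan_sum_affine_le[OF \<nu>], intro allI impI ballI)
    fix i q assume "i < n" "q \<in> Q"
    have "(1 + \<delta>) * infdist (p i) (cell_sq q) \<le> (1 + \<delta>) * dist (p i) (t q)"
      using t \<open>q \<in> Q\<close> \<open>0 \<le> \<delta>\<close> by (intro mult_left_mono) (simp_all add: infdist_le_dist_closure)
    with cells \<open>i < n\<close> \<open>q \<in> Q\<close> show "max_dist (p i) (cell_sq q) \<le> (1 + \<delta>) * dist (p i) (t q) + e q"
      by fastforce
  qed
  finally have spread: "plan_cost n p (spread_plan m a b c Q \<nu>) \<le> (1 + \<delta>) * disc_cost n p Q t \<nu> + ?E" .
  have "dist (p i) (t q) \<le> max_dist (p i) (cell_sq q)" if "q \<in> Q" for i q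
    using t that by (simp add: dist_closure_le_max_dist[OF bounded_sq])
  with cells have "disc_cost n p Q t (cell_plan g) \<le> (1 + \<delta>) * plan_cost n p g + ?E"
    by (intro disc_cost_cell_plan_le[OF Q g \<open>0 \<le> \<delta>\<close>]) (fastforce intro: order_trans)
  with \<nu>_opt cell_plan_is_disc_plan[OF Q g] have "disc_cost n p Q t \<nu> \<le> (1 + \<delta>) * plan_cost n p g + ?E"
    by fastforce
  then have "(1 + \<delta>) * disc_cost n p Q t \<nu> \<le> (1 + \<delta>) * ((1 + \<delta>) * plan_cost n p g + ?E)"
    using \<open>0 \<le> \<delta>\<close> by (intro mult_left_mono) auto
  with spread show ?thesis
    by (simp add: power2_eq_square algebra_simps)
qed

section \<open>The additive error and the lower bound\<close>

definition near_error :: "nat \<Rightarrow> nat \<Rightarrow> (nat \<Rightarrow> pt) \<Rightarrow> real \<Rightarrow> pt set \<Rightarrow> real" where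
  "near_error n m p \<delta> C =
     (if \<exists>k<n. near_cell (p k) (\<delta> / sqrt (real n * real m)) C then 2 * (\<delta> / sqrt (real n * real m)) else 0)"

lemma leaf_cell_max_dist_le:
  assumes "q \<in> leaf_cells n m p \<delta> U \<Delta> org" and "\<Delta> > 0" and "0 \<le> \<delta>" and "i < n"
  shows "max_dist (p i) (cell_sq q) \<le> (1 + \<delta>) * infdist (p i) (cell_sq q) + near_error n m p \<delta> (cell_sq q)"
proof -
  have "cell_sq q \<noteq> {}"
    using leaf_cells_side_pos[OF assms(2,1)] by (cases "fst q") (auto simp: sq_def)
  show ?thesis
  proof (cases "\<exists>k<n. near_cell (p k) (\<delta> / sqrt (real n * real m)) (cell_sq q)")
    case True
    then have "max_dist (p i) (cell_sq q) \<le> infdist (p i) (cell_sq q) + 2 * (\<delta> / sqrt (real n * real m))"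
      using \<open>cell_sq q \<noteq> {}\<close> max_dist_le_infdist_near unfolding near_cell_def by blast
    moreover have "infdist (p i) (cell_sq q) \<le> (1 + \<delta>) * infdist (p i) (cell_sq q)"
      using \<open>0 \<le> \<delta>\<close> infdist_nonneg[of "p i" "cell_sq q"] by (simp add: distrib_right)
    ultimately show ?thesis
      unfolding near_error_def if_P[OF True] by linarith
  next
    case False
    with assms(1,4) have "\<not> ratio_exceeds (p i) \<delta> (cell_sq q)"
      unfolding leaf_cells_def splits_def by blast
    then show ?thesis
      unfolding near_error_def if_not_P[OF False]
      using max_dist_le_infdist_ratio[OF \<open>cell_sq q \<noteq> {}\<close>] by simp
  qed
qed

definition point_boxes :: "nat \<Rightarrow> (nat \<Rightarrow> pt) \<Rightarrow> real \<Rightarrow> pt set" where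
  "point_boxes n p s = (\<Union>i<n. cbox (fst (p i) - s, snd (p i) - s) (fst (p i) + s, snd (p i) + s))"

lemma point_boxes_sets [measurable]: "point_boxes n p s \<in> sets lborel"
  unfolding point_boxes_def by (intro sets.finite_UN) auto

lemma mem_point_boxes: "i < n \<Longrightarrow> dist x (p i) \<le> s \<Longrightarrow> x \<in> point_boxes n p s"
  unfolding point_boxes_def
  using dist_fst_le[of x "p i"] dist_snd_le[of x "p i"]
  by (cases x) (force simp: cbox_Pair_eq dist_real_def abs_le_iff)

lemma tri_dens_mass_point_boxes:
  assumes "0 \<le> s"
  shows "(LINT x|lborel. tri_dens m a b c x * indicator (point_boxes n p s) x) \<le> real m * (real n * (4 * s\<^sup>2))"
proof -
  have finite: "emeasure lborel (point_boxes n p s) < \<infinity>"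
    unfolding point_boxes_def by (intro emeasure_bounded_finite bounded_UN) auto
  have measure: "measure lborel (point_boxes n p s) \<le> real n * (4 * s\<^sup>2)"
  proof -
    have "measure lborel (point_boxes n p s)
          \<le> (\<Sum>i<n. measure lborel (cbox (fst (p i) - s, snd (p i) - s) (fst (p i) + s, snd (p i) + s)))"
      unfolding point_boxes_def by (rule measure_UNION_le) auto
    also have "\<dots> = real n * (4 * s\<^sup>2)"
      using assms by (simp add: measure_lborel_cbox_eq Basis_prod_def power2_eq_square)
    finally show ?thesis .
  qed
  have "(LINT x|lborel. tri_dens m a b c x * indicator (point_boxes n p s) x)
        \<le> real m * measure lborel (point_boxes n p s)"
    by (rule tri_dens_mass_le[OF point_boxes_sets finite])
  also have "\<dots> \<le> real m * (real n * (4 * s\<^sup>2))"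
    using measure by (rule mult_left_mono) simp
  finally show ?thesis .
qed

lemma sum_cell_mass_le:
  assumes "finite Q" and disj: "disjoint_family_on cell_sq Q" and sub: "\<forall>q\<in>Q. cell_sq q \<subseteq> B"
    and B: "B \<in> sets lborel"
  shows "(\<Sum>q\<in>Q. cell_mass m a b c q) \<le> (LINT x|lborel. tri_dens m a b c x * indicator B x)"
proof -
  have "(\<Sum>q\<in>Q. cell_mass m a b c q) = (LINT x|lborel. (\<Sum>q\<in>Q. tri_dens m a b c x * indicator (cell_sq q) x))"
    unfolding cell_mass_eq_integral
    by (rule Bochner_Integration.integral_sum[symmetric]) (rule integrable_tri_dens_indicator[OF sq_sets])
  also have "\<dots> \<le> (LINT x|lborel. tri_dens m a b c x * indicator B x)"
  proof (rule integral_mono)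
    show "integrable lborel (\<lambda>x. \<Sum>q\<in>Q. tri_dens m a b c x * indicator (cell_sq q) x)"
      by (intro Bochner_Integration.integrable_sum integrable_tri_dens_indicator sq_sets)
    show "integrable lborel (\<lambda>x. tri_dens m a b c x * indicator B x)"
      by (rule integrable_tri_dens_indicator[OF B])
    fix x
    have "(\<Sum>q\<in>Q. indicator (cell_sq q) x) \<le> (indicator B x :: real)"
    proof (cases "\<exists>q\<in>Q. x \<in> cell_sq q")
      case True
      then obtain q where "q \<in> Q" "x \<in> cell_sq q"
        by blast
      moreover have "x \<in> B"
        using sub \<open>q \<in> Q\<close> \<open>x \<in> cell_sq q\<close> by blast
      ultimately show ?thesis
        using sum_indicator_disjoint_family[OF disj, of x q "\<lambda>_. 1 :: real"] \<open>finite Q\<close> by simp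
    qed auto
    then show "(\<Sum>q\<in>Q. tri_dens m a b c x * indicator (cell_sq q) x) \<le> tri_dens m a b c x * indicator B x"
      using tri_dens_nonneg by (simp add: mult_left_mono flip: sum_distrib_left)
  qed
  finally show ?thesis .
qed

lemma tri_dens_mass_point_boxes_quarter:
  assumes "0 < n" and "0 < m"
  shows "(LINT x|lborel. tri_dens m a b c x * indicator (point_boxes n p (1 / (4 * sqrt (real n * real m)))) x) \<le> 1 / 4"
proof -
  let ?s = "1 / (4 * sqrt (real n * real m))"
  have "(LINT x|lborel. tri_dens m a b c x * indicator (point_boxes n p ?s) x) \<le> real m * (real n * (4 * ?s\<^sup>2))"
    by (rule tri_dens_mass_point_boxes) simp
  also have "\<dots> = 1 / 4"
    using assms by (simp add: power2_eq_square field_simps)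
  finally show ?thesis .
qed

lemma sum_near_error_mass_le:
  assumes "finite Q" and "disjoint_family_on cell_sq Q" and "0 < n" and "0 < m" and "0 \<le> \<delta>" and "\<delta> \<le> 1 / 4"
  shows "(\<Sum>q\<in>Q. near_error n m p \<delta> (cell_sq q) * cell_mass m a b c q)
           \<le> 2 * \<delta> * (1 / (4 * sqrt (real n * real m)))"
proof -
  define r where "r = \<delta> / sqrt (real n * real m)"
  define s where "s = 1 / (4 * sqrt (real n * real m))"
  have "0 \<le> r" "0 \<le> s" "r = 4 * \<delta> * s"
    using assms by (simp_all add: r_def s_def)
  then have "r \<le> s"
    using mult_right_mono[of "4 * \<delta>" 1 s] assms by simp
  let ?N = "{q \<in> Q. \<exists>k<n. near_cell (p k) r (cell_sq q)}"
  have "(\<Sum>q\<in>Q. near_error n m p \<delta> (cell_sq q) * cell_mass m a b c q)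
        = (\<Sum>q\<in>Q. if \<exists>k<n. near_cell (p k) r (cell_sq q) then 2 * r * cell_mass m a b c q else 0)"
    unfolding near_error_def r_def by (intro sum.cong) auto
  also have "\<dots> = 2 * r * (\<Sum>q\<in>?N. cell_mass m a b c q)"
    using \<open>finite Q\<close> by (simp add: sum.inter_filter sum_distrib_left) (rule sum.cong; auto)
  finally have split: "(\<Sum>q\<in>Q. near_error n m p \<delta> (cell_sq q) * cell_mass m a b c q)
                       = 2 * r * (\<Sum>q\<in>?N. cell_mass m a b c q)" .
  have "(\<Sum>q\<in>?N. cell_mass m a b c q) \<le> (LINT x|lborel. tri_dens m a b c x * indicator (point_boxes n p s) x)"
  proof (rule sum_cell_mass_le)
    show "disjoint_family_on cell_sq ?N"
      using assms(2) by (rule disjoint_family_on_mono[rotated]) auto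
    show "\<forall>q\<in>?N. cell_sq q \<subseteq> point_boxes n p s"
      using \<open>r \<le> s\<close> unfolding near_cell_def by (force simp: dist_commute intro: mem_point_boxes)
    show "point_boxes n p s \<in> sets lborel"
      by (rule point_boxes_sets)
  qed (use \<open>finite Q\<close> in simp)
  also have "\<dots> \<le> 1 / 4"
    unfolding s_def by (rule tri_dens_mass_point_boxes_quarter[OF assms(3,4)])
  finally have "2 * r * (\<Sum>q\<in>?N. cell_mass m a b c q) \<le> 2 * r * (1 / 4)"
    using \<open>0 \<le> r\<close> by (intro mult_left_mono) auto
  with split show ?thesis
    using \<open>r = 4 * \<delta> * s\<close> by (simp add: s_def)
qed

lemma plan_cost_ge_outside_mass:
  assumes g: "is_plan n w (tri_dens m a b c) g" and w: "(\<Sum>i<n. w i) = 1"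
    and B: "B \<in> sets lborel" and "0 \<le> s" and far: "\<forall>i<n. \<forall>x. x \<notin> B \<longrightarrow> s \<le> dist x (p i)"
  shows "s * (1 - (LINT x|lborel. tri_dens m a b c x * indicator B x)) \<le> plan_cost n p g"
proof -
  have "s * w i - s * (LINT x|lborel. g i x * indicator B x) \<le> (LINT x|lborel. g i x * dist x (p i))"
    if "i < n" for i
  proof -
    note g_int = is_planD(2)[OF g that]
    have "s * w i - s * (LINT x|lborel. g i x * indicator B x)
          = (LINT x|lborel. s * g i x - s * (g i x * indicator B x))"
      using is_planD(3)[OF g that] integrable_real_mult_indicator[OF B g_int] g_int by simp
    also have "\<dots> \<le> (LINT x|lborel. g i x * dist x (p i))"
    proof (rule integral_mono)
      show "integrable lborel (\<lambda>x. s * g i x - s * (g i x * indicator B x))"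
        using integrable_real_mult_indicator[OF B g_int] g_int by simp
      show "integrable lborel (\<lambda>x. g i x * dist x (p i))"
        by (rule integrable_plan_dist[OF g that])
      show "s * g i x - s * (g i x * indicator B x) \<le> g i x * dist x (p i)" for x
      proof (cases "x \<in> B")
        case False
        with far that have "s \<le> dist x (p i)"
          by blast
        from mult_left_mono[OF this is_planD(1)[OF g that]] False show ?thesis
          by (simp add: mult.commute)
      qed (simp add: is_planD(1)[OF g that])
    qed
    finally show ?thesis .
  qed
  then have "(\<Sum>i<n. s * w i - s * (LINT x|lborel. g i x * indicator B x)) \<le> plan_cost n p g"
    unfolding plan_cost_def by (intro sum_mono) auto
  moreover have "(\<Sum>i<n. LINT x|lborel. g i x * indicator B x) = (LINT x|lborel. tri_dens m a b c x * indicator B x)"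
    by (rule sum_plan_restrict_eq[OF g B tri_dens_measurable])
  ultimately show ?thesis
    using w by (simp add: sum_subtractf right_diff_distrib sum_distrib_left[symmetric])
qed

lemma plan_cost_ge:
  assumes g: "is_plan n w (tri_dens m a b c) g" and "(\<Sum>i<n. w i) = 1" and "0 < n" and "0 < m"
  shows "3 / 4 * (1 / (4 * sqrt (real n * real m))) \<le> plan_cost n p g"
proof -
  let ?s = "1 / (4 * sqrt (real n * real m))"
  have "\<forall>i<n. \<forall>x. x \<notin> point_boxes n p ?s \<longrightarrow> ?s \<le> dist x (p i)"
    using mem_point_boxes by (meson not_le less_imp_le)
  then have "?s * (1 - (LINT x|lborel. tri_dens m a b c x * indicator (point_boxes n p ?s) x)) \<le> plan_cost n p g"
    by (intro plan_cost_ge_outside_mass[OF g assms(2) point_boxes_sets]) auto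
  moreover have "?s * (1 - 1 / 4) \<le> ?s * (1 - (LINT x|lborel. tri_dens m a b c x * indicator (point_boxes n p ?s) x))"
    using tri_dens_mass_point_boxes_quarter[OF assms(3,4)] by (intro mult_left_mono) auto
  ultimately show ?thesis
    by simp
qed

text \<open>This is how finiteness of the leaf set is obtained: a sum over an infinite set is 0,
  so a discrete plan with a positive row total has finitely many targets.\<close>
lemma is_disc_plan_finite:
  assumes "is_disc_plan n w Q wt \<nu>" and "0 < n" and "0 < w 0"
  shows "finite Q"
  using assms unfolding is_disc_plan_def by (metis less_irrefl sum.infinite)

lemma approximation_arith:
  fixes \<delta> s C E P :: real
  assumes "0 \<le> \<delta>" "\<delta> \<le> 1 / 4" "0 \<le> s" "3 / 4 * s \<le> C" "E \<le> 2 * \<delta> * s"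
    and P: "P \<le> (1 + \<delta>)\<^sup>2 * C + (2 + \<delta>) * E"
  shows "P \<le> (1 + 9 * \<delta>) * C"
proof -
  have "0 \<le> C" "s \<le> 4 / 3 * C"
    using assms by linarith+
  have "E \<le> 2 * (\<delta> * s)"
    using assms(5) by (simp add: mult.assoc)
  also have "\<dots> \<le> 2 * (\<delta> * (4 / 3 * C))"
    using mult_left_mono[OF \<open>s \<le> 4 / 3 * C\<close> assms(1)] by (simp add: mult_ac)
  finally have "E \<le> 8 / 3 * (\<delta> * C)"
    by simp
  then have "(2 + \<delta>) * E \<le> (2 + \<delta>) * (8 / 3 * (\<delta> * C))"
    using assms by (intro mult_left_mono) auto
  moreover have "\<delta> * (\<delta> * C) \<le> 1 / 4 * (\<delta> * C)"
    using assms \<open>0 \<le> C\<close> by (intro mult_right_mono) auto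
  moreover have "0 \<le> \<delta> * C"
    using assms \<open>0 \<le> C\<close> by simp
  ultimately show ?thesis
    using P by (simp add: power2_eq_square algebra_simps)
qed

theorem theorem4:
  fixes n m :: nat and p :: "nat \<Rightarrow> pt" and w :: "nat \<Rightarrow> real"
    and a b c :: "nat \<Rightarrow> pt" and \<delta> :: real and org :: pt
    and t :: "pt \<times> real \<Rightarrow> pt" and \<nu> :: "nat \<Rightarrow> pt \<times> real \<Rightarrow> real"
  assumes w_pos: "\<forall>i<n. 0 < w i"
    and w_sum: "(\<Sum>i<n. w i) = 1"
    and area: "(\<Sum>j<m. measure lborel (tri (a j) (b j) (c j))) = 1"
    and delta: "0 < \<delta>" "\<delta> \<le> 1 / (2 * pi)"
    and t_in: "\<forall>q\<in>leaf_cells n m p \<delta> (tri_union m a b c) (longest_edge m a b c) org.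
                 t q \<in> csq (fst q) (snd q)"
    and nu_plan: "is_disc_plan n w (leaf_cells n m p \<delta> (tri_union m a b c) (longest_edge m a b c) org)
                    (cell_mass m a b c) \<nu>"
    and nu_opt: "\<forall>\<nu>'. is_disc_plan n w (leaf_cells n m p \<delta> (tri_union m a b c) (longest_edge m a b c) org)
                    (cell_mass m a b c) \<nu>' \<longrightarrow>
                  disc_cost n p (leaf_cells n m p \<delta> (tri_union m a b c) (longest_edge m a b c) org) t \<nu>
                  \<le> disc_cost n p (leaf_cells n m p \<delta> (tri_union m a b c) (longest_edge m a b c) org) t \<nu>'"
  shows "\<forall>g. is_plan n w (tri_dens m a b c) g \<longrightarrow>
           plan_cost n p (spread_plan m a b c
              (leaf_cells n m p \<delta> (tri_union m a b c) (longest_edge m a b c) org) \<nu>)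
           \<le> (1 + 9 * \<delta>) * plan_cost n p g"
proof (intro allI impI)
  fix g assume g: "is_plan n w (tri_dens m a b c) g"
  let ?Q = "leaf_cells n m p \<delta> (tri_union m a b c) (longest_edge m a b c) org"
  let ?s = "1 / (4 * sqrt (real n * real m))"
  have "0 < n"
    using w_sum by (cases n) auto
  have "0 < m"
    using area by (cases m) auto
  have \<Delta>: "0 < longest_edge m a b c"
    using area by (rule longest_edge_pos)
  have "1 / (2 * pi) \<le> 1 / 4"
    using pi_gt3 by (intro divide_left_mono) auto
  with delta have "0 \<le> \<delta>" "\<delta> \<le> 1 / 4"
    by linarith+
  have "finite ?Q"
    using is_disc_plan_finite[OF nu_plan \<open>0 < n\<close>] w_pos \<open>0 < n\<close> by blast
  then have Q: "cell_partition ?Q (tri_union m a b c)"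
    by (rule leaf_cells_partition[OF \<Delta> \<open>0 < n\<close> \<open>0 < m\<close> delta(1)])
  have sides: "\<forall>q\<in>?Q. 0 < snd q"
    using leaf_cells_side_pos[OF \<Delta>] by blast
  then have "\<forall>q\<in>?Q. t q \<in> closure (cell_sq q)"
    using t_in by (simp add: closure_sq)
  moreover have "\<forall>i<n. \<forall>q\<in>?Q. max_dist (p i) (cell_sq q)
                   \<le> (1 + \<delta>) * infdist (p i) (cell_sq q) + near_error n m p \<delta> (cell_sq q)"
    using leaf_cell_max_dist_le[OF _ \<Delta> \<open>0 \<le> \<delta>\<close>] by blast
  ultimately have spread: "plan_cost n p (spread_plan m a b c ?Q \<nu>)
        \<le> (1 + \<delta>)\<^sup>2 * plan_cost n p g + (2 + \<delta>) * (\<Sum>q\<in>?Q. near_error n m p \<delta> (cell_sq q) * cell_mass m a b c q)"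
    by (rule spread_plan_cost_bound[OF Q sides _ nu_plan nu_opt g \<open>0 \<le> \<delta>\<close>])
  have near: "(\<Sum>q\<in>?Q. near_error n m p \<delta> (cell_sq q) * cell_mass m a b c q) \<le> 2 * \<delta> * ?s"
    using sum_near_error_mass_le[OF \<open>finite ?Q\<close> leaf_cells_disjoint[OF \<Delta>] \<open>0 < n\<close> \<open>0 < m\<close>
        \<open>0 \<le> \<delta>\<close> \<open>\<delta> \<le> 1 / 4\<close>] .
  have lower: "3 / 4 * ?s \<le> plan_cost n p g"
    by (rule plan_cost_ge[OF g w_sum \<open>0 < n\<close> \<open>0 < m\<close>])
  show "plan_cost n p (spread_plan m a b c ?Q \<nu>) \<le> (1 + 9 * \<delta>) * plan_cost n p g"
    by (rule approximation_arith[OF \<open>0 \<le> \<delta>\<close> \<open>\<delta> \<le> 1 / 4\<close> _ lower near spread]) simp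
qed

end
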